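(* Let $d_1\ge1$, $d_2\ge1$, and in $\mathbb{R}^{d_1}_x\times\mathbb{R}^{d_2}_y$ let $N=\{y_1=0\}$ with coordinates $(x,y')=(\tilde x,x'',\tilde y,y'')\in\mathbb{R}^{p_1}\times\mathbb{R}^{d_1-p_1}\times\mathbb{R}^{p_2}\times\mathbb{R}^{d_2-p_2-1}$, where $0\le p_1\le d_1$, $0\le p_2\le d_2-1$ and $(d_1-p_1)+(d_2-1-p_2)\ge1$, and let $M=\{y_1=0,\ x''=0,\ y''=0\}\subseteq N$. Then for every integer $k\ge0$ there exist Cauchy data $(u_0,u_1)$ on $N$, not both identically zero, which satisfy the constraint $\mathrm{supp}(\hat u_0,\hat u_1)\subseteq\{(\xi,\eta'):|\eta'|<|\xi|\}$ and vanish to order $k$ on $M$ (i.e. all partial derivatives of $u_0$ and $u_1$ of order at most $k$ vanish on $M$).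
   Context: The Fourier transform is taken in $(x,y')$ with dual variables $(\xi,\eta')\in\mathbb{R}^{d_1}\times\mathbb{R}^{d_2-1}$. Data satisfying this support constraint are the "constraint-satisfying" Cauchy data for $\partial_{y_1}^2u=\Delta_xu-\Delta_{y'}u$, giving globally defined solutions in $y_1$. *)

theory Defs
  imports "HOL-Analysis.Analysis"
begin

text \<open>Points of the hypersurface N = {y1 = 0} are modelled as vectors in real^'n, where the
  coordinate index set UNIV::'n set is partitioned into X (the x-coordinates, d1 of them) and
  Y (the y'-coordinates, d2-1 of them, possibly none).\<close>

definition pnorm :: "'n set \<Rightarrow> real^'n \<Rightarrow> real" where
  "pnorm I v = sqrt (\<Sum>i\<in>I. (v $ i)\<^sup>2)"

definition pd :: "'n::finite \<Rightarrow> (real^'n \<Rightarrow> complex) \<Rightarrow> real^'n \<Rightarrow> complex" where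
  "pd i f = (\<lambda>z. vector_derivative (\<lambda>t. f (z + t *\<^sub>R axis i 1)) (at 0))"

fun iter_pd :: "'n::finite list \<Rightarrow> (real^'n \<Rightarrow> complex) \<Rightarrow> real^'n \<Rightarrow> complex" where
  "iter_pd [] f = f"
| "iter_pd (i # is) f = pd i (iter_pd is f)"

definition smooth_fun :: "(real^'n::finite \<Rightarrow> complex) \<Rightarrow> bool" where
  "smooth_fun f \<longleftrightarrow> (\<forall>is. continuous_on UNIV (iter_pd is f) \<and>
      (\<forall>i z. (\<lambda>t. iter_pd is f (z + t *\<^sub>R axis i 1)) differentiable (at 0)))"

definition fourier :: "(real^'n::finite \<Rightarrow> complex) \<Rightarrow> real^'n \<Rightarrow> complex" where
  "fourier u \<xi> = integral\<^sup>L lborel (\<lambda>z. exp (- \<i> * complex_of_real (\<xi> \<bullet> z)) * u z)"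

definition fsupp :: "(real^'n::finite \<Rightarrow> complex) \<Rightarrow> (real^'n) set" where
  "fsupp u = closure {\<xi>. fourier u \<xi> \<noteq> 0}"

definition vanish_order :: "nat \<Rightarrow> (real^'n) set \<Rightarrow> (real^'n::finite \<Rightarrow> complex) \<Rightarrow> bool" where
  "vanish_order k M f \<longleftrightarrow> (\<forall>is z. length is \<le> k \<longrightarrow> z \<in> M \<longrightarrow> iter_pd is f z = 0)"

end

theory Submission
  imports Defs "HOL-Probability.Probability" "HOL-Complex_Analysis.Cauchy_Integral_Formula"
begin

(* The data are u0(z) = \<Prod>i g_i(z_i) and u1 = 0, where g_i(t) = e^{i R_i t} (e^{it} - 1)^{k+1} h(t) with
   h(t) = 2(1 - cos t)/t^2 the characteristic function of the triangular density max 0 (1 - |x|).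
   By Levy inversion the Fourier transform of h vanishes outside [-1,1]; expanding (e^{it} - 1)^{k+1}
   binomially, that of g_i vanishes outside [R_i - 1, R_i + k + 2]. By Fubini the Fourier transform of
   u0 is the product of these, so it is supported in a box, which lies inside the cone |\<eta>'| < |\<xi>| once
   one x-coordinate R_a is large and the others are 0. Each g_i extends to an entire function, so u0 is
   smooth, and the factor (e^{it} - 1)^{k+1} makes g_j vanish to order k at 0 for a coordinate j normal
   to M, hence every derivative of u0 of order at most k vanishes on M. *)

section \<open>An entire wave packet\<close>

definition csinc :: "complex \<Rightarrow> complex" where
  "csinc w = (if w = 0 then 1 else sin w / w)"

lemma holomorphic_csinc: "csinc holomorphic_on UNIV"
proof -
  have "(\<lambda>z. if z = 0 then deriv sin 0 else (sin z - sin 0) / (z - 0)) holomorphic_on UNIV"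
    by (rule pole_lemma_open) (auto intro!: holomorphic_intros)
  moreover have "deriv sin 0 = (1::complex)"
    using DERIV_sin[of "0::complex"] DERIV_imp_deriv by fastforce
  ultimately have "(\<lambda>z. if z = 0 then deriv sin 0 else (sin z - sin 0) / (z - 0)) = csinc"
    by (simp add: fun_eq_iff csinc_def)
  with \<open>_ holomorphic_on UNIV\<close> show ?thesis by simp
qed

definition fejer :: "complex \<Rightarrow> complex" where
  "fejer w = csinc (w / 2) ^ 2"

lemma holomorphic_fejer: "fejer holomorphic_on UNIV"
proof -
  have "(csinc \<circ> (\<lambda>w. w / 2)) holomorphic_on UNIV"
    by (rule holomorphic_on_compose_gen[OF _ holomorphic_csinc]) (auto intro!: holomorphic_intros)
  then show ?thesis
    unfolding fejer_def by (auto intro!: holomorphic_intros simp: o_def)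
qed

lemma fejer_0 [simp]: "fejer 0 = 1"
  by (simp add: fejer_def csinc_def)

lemma fejer_of_real:
  assumes "t \<noteq> 0"
  shows "fejer (of_real t) = of_real (2 * (1 - cos t) / t\<^sup>2)"
proof -
  have "fejer (of_real t) = of_real ((sin (t/2) / (t/2))\<^sup>2)"
    using assms by (simp add: fejer_def csinc_def sin_of_real[symmetric])
  also have "(sin (t/2) / (t/2))\<^sup>2 = 2 * (1 - cos t) / t\<^sup>2"
    using assms cos_double_sin[of "t/2"] by (simp add: field_simps power2_eq_square)
  finally show ?thesis .
qed

lemma higher_deriv_power_mult_eq_0:
  fixes h Q :: "complex \<Rightarrow> complex"
  assumes h: "h holomorphic_on UNIV" and hz: "h z = 0"
    and "Q holomorphic_on UNIV" and "m < n"
  shows "(deriv ^^ m) (\<lambda>w. h w ^ n * Q w) z = 0"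
  using assms(3,4)
proof (induction m arbitrary: n Q)
  case 0
  then show ?case using hz by simp
next
  case (Suc m)
  then obtain n' where n: "n = Suc n'" by (cases n) auto
  define Q' where "Q' w = of_nat n * deriv h w * Q w + h w * deriv Q w" for w
  have "Q' holomorphic_on UNIV"
    unfolding Q'_def using h Suc.prems(1) by (auto intro!: holomorphic_intros holomorphic_deriv)
  have "deriv (\<lambda>w. h w ^ n * Q w) = (\<lambda>w. h w ^ n' * Q' w)"
  proof
    fix w
    have dh: "(h has_field_derivative deriv h w) (at w)"
      and dQ: "(Q has_field_derivative deriv Q w) (at w)"
      using holomorphic_derivI[OF h open_UNIV] holomorphic_derivI[OF Suc.prems(1) open_UNIV] by auto
    have "((\<lambda>w. h w ^ n * Q w) has_field_derivative
            of_nat n * (deriv h w * h w ^ n') * Q w + deriv Q w * h w ^ n) (at w)"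
      using DERIV_mult[OF DERIV_power[OF dh, of n] dQ] by (simp only: n diff_Suc_Suc minus_nat.diff_0)
    moreover have "of_nat n * (deriv h w * h w ^ n') * Q w + deriv Q w * h w ^ n = h w ^ n' * Q' w"
      unfolding Q'_def n by (simp add: algebra_simps)
    ultimately show "deriv (\<lambda>w. h w ^ n * Q w) w = h w ^ n' * Q' w"
      using DERIV_imp_deriv by metis
  qed
  then have "(deriv ^^ Suc m) (\<lambda>w. h w ^ n * Q w) = (deriv ^^ m) (\<lambda>w. h w ^ n' * Q' w)"
    by (simp add: funpow_Suc_right del: funpow.simps)
  then show ?case
    using Suc.IH[OF \<open>Q' holomorphic_on UNIV\<close>] Suc.prems n by simp
qed

definition packet :: "real \<Rightarrow> nat \<Rightarrow> complex \<Rightarrow> complex" where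
  "packet R k w = exp (\<i> * of_real R * w) * (exp (\<i> * w) - 1) ^ Suc k * fejer w"

lemma holomorphic_packet: "packet R k holomorphic_on UNIV"
  unfolding packet_def by (auto intro!: holomorphic_intros holomorphic_fejer[THEN holomorphic_on_subset])

lemma higher_deriv_packet_0:
  assumes "m \<le> k"
  shows "(deriv ^^ m) (packet R k) 0 = 0"
proof -
  have "packet R k = (\<lambda>w. (exp (\<i> * w) - 1) ^ Suc k * (exp (\<i> * of_real R * w) * fejer w))"
    by (simp add: packet_def fun_eq_iff algebra_simps)
  moreover have "(deriv ^^ m) (\<lambda>w. (exp (\<i> * w) - 1) ^ Suc k * (exp (\<i> * of_real R * w) * fejer w)) 0 = 0"
    using assms
    by (intro higher_deriv_power_mult_eq_0)
       (auto intro!: holomorphic_intros holomorphic_fejer[THEN holomorphic_on_subset])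
  ultimately show ?thesis by simp
qed

section \<open>Tensor products of entire functions\<close>

definition tensor :: "('n::finite \<Rightarrow> complex \<Rightarrow> complex) \<Rightarrow> ('n \<Rightarrow> nat) \<Rightarrow> real^'n \<Rightarrow> complex" where
  "tensor F c z = (\<Prod>i\<in>UNIV. (deriv ^^ c i) (F i) (of_real (z $ i)))"

lemma has_field_derivative_higher_deriv:
  assumes "f holomorphic_on UNIV"
  shows "((deriv ^^ n) f has_field_derivative (deriv ^^ Suc n) f w) (at w)"
  using holomorphic_derivI[OF holomorphic_higher_deriv[OF assms open_UNIV] open_UNIV, of w] by simp

lemma has_vector_derivative_tensor_axis:
  fixes z :: "real^'n::finite"
  assumes F: "\<And>i. F i holomorphic_on UNIV"
  shows "((\<lambda>t. tensor F c (z + t *\<^sub>R axis j 1)) has_vector_derivative tensor F (c(j := Suc (c j))) z) (at 0)"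
proof -
  define C where "C = (\<Prod>i\<in>UNIV - {j}. (deriv ^^ c i) (F i) (of_real (z $ i)))"
  define f where "f w = (deriv ^^ c j) (F j) (of_real (z $ j) + w) * C" for w
  have line: "tensor F c (z + t *\<^sub>R axis j 1) = f (of_real t)" for t
  proof -
    have "tensor F c (z + t *\<^sub>R axis j 1) = (deriv ^^ c j) (F j) (of_real (z $ j + t)) *
        (\<Prod>i\<in>UNIV - {j}. (deriv ^^ c i) (F i) (of_real ((z + t *\<^sub>R axis j 1) $ i)))"
      unfolding tensor_def by (subst prod.remove[of _ j]) (auto simp: axis_def)
    also have "(\<Prod>i\<in>UNIV - {j}. (deriv ^^ c i) (F i) (of_real ((z + t *\<^sub>R axis j 1) $ i))) = C"
      unfolding C_def by (rule prod.cong) (auto simp: axis_def)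
    finally show ?thesis by (simp add: f_def)
  qed
  have "((\<lambda>w. (deriv ^^ c j) (F j) (of_real (z $ j) + w)) has_field_derivative
          (deriv ^^ Suc (c j)) (F j) (of_real (z $ j) + 0) * 1) (at 0)"
    by (rule DERIV_chain2[OF has_field_derivative_higher_deriv[OF F]]) (auto intro!: derivative_eq_intros)
  then have "(f has_field_derivative (deriv ^^ Suc (c j)) (F j) (of_real (z $ j)) * C) (at (of_real 0))"
    unfolding f_def by (auto intro: DERIV_cmult_right)
  then have "((\<lambda>t. f (of_real t)) has_vector_derivative (deriv ^^ Suc (c j)) (F j) (of_real (z $ j)) * C) (at 0)"
    by (rule has_vector_derivative_real_field)
  moreover have "(deriv ^^ Suc (c j)) (F j) (of_real (z $ j)) * C = tensor F (c(j := Suc (c j))) z"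
    unfolding tensor_def C_def by (subst (2) prod.remove[of _ j]) (auto intro!: prod.cong)
  ultimately show ?thesis
    using line by simp
qed

lemma pd_tensor:
  assumes "\<And>i. F i holomorphic_on UNIV"
  shows "pd j (tensor F c) = tensor F (c(j := Suc (c j)))"
  unfolding pd_def by (rule ext vector_derivative_at has_vector_derivative_tensor_axis assms)+

lemma iter_pd_tensor:
  assumes "\<And>i. F i holomorphic_on UNIV"
  shows "iter_pd is (tensor F c) = tensor F (\<lambda>i. c i + count_list is i)"
proof (induction "is")
  case (Cons j js)
  have "(\<lambda>i. c i + count_list js i)(j := Suc (c j + count_list js j)) = (\<lambda>i. c i + count_list (j # js) i)"
    by (auto simp: fun_eq_iff)
  then show ?case
    using Cons by (simp add: pd_tensor[OF assms])
qed simp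

lemma continuous_on_tensor:
  fixes F :: "'n::finite \<Rightarrow> complex \<Rightarrow> complex"
  assumes F: "\<And>i. F i holomorphic_on UNIV"
  shows "continuous_on UNIV (tensor F c)"
proof -
  have "continuous_on UNIV (\<lambda>z::real^'n. (deriv ^^ c i) (F i) (of_real (z $ i)))" for i
  proof -
    have "continuous_on UNIV ((deriv ^^ c i) (F i))"
      by (intro holomorphic_on_imp_continuous_on holomorphic_higher_deriv F) simp
    then show ?thesis
      by (rule continuous_on_compose2) (auto intro!: continuous_intros)
  qed
  then show ?thesis
    unfolding tensor_def by (intro continuous_on_prod) auto
qed

lemma smooth_fun_tensor:
  assumes "\<And>i. F i holomorphic_on UNIV"
  shows "smooth_fun (tensor F c)"
  unfolding smooth_fun_def iter_pd_tensor[OF assms]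
  using continuous_on_tensor has_vector_derivative_tensor_axis differentiableI_vector assms by blast

lemma iter_pd_zero: "iter_pd is (\<lambda>_::real^'n::finite. 0::complex) = (\<lambda>_. 0)"
  by (induction "is") (simp_all add: pd_def vector_derivative_const_at)

lemma smooth_fun_zero: "smooth_fun (\<lambda>_::real^'n::finite. 0::complex)"
  unfolding smooth_fun_def iter_pd_zero by simp

section \<open>The Fejer kernel as a characteristic function\<close>

definition tent :: "real \<Rightarrow> real" where
  "tent x = max 0 (1 - \<bar>x\<bar>)"

lemma tent_nonneg: "0 \<le> tent x"
  by (simp add: tent_def)

lemma tent_le_1: "tent x \<le> 1"
  by (simp add: tent_def)

lemma tent_eq_0: "1 \<le> \<bar>x\<bar> \<Longrightarrow> tent x = 0"
  by (simp add: tent_def)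

lemma borel_measurable_tent [measurable]: "tent \<in> borel_measurable borel"
  unfolding tent_def by (intro borel_measurable_continuous_onI continuous_intros)

lemma tent_has_integral: "(tent has_integral 1) UNIV"
proof -
  have "((\<lambda>x::real. 1 + x) has_integral ((\<lambda>x::real. x + x\<^sup>2/2) 0 - (\<lambda>x. x + x\<^sup>2/2) (-1))) {-1..0}"
    by (rule fundamental_theorem_of_calculus)
       (auto simp: has_real_derivative_iff_has_vector_derivative[symmetric] intro!: derivative_eq_intros)
  then have "((\<lambda>x::real. 1 + x) has_integral 1/2) {-1..0}"
    by simp
  then have left: "(tent has_integral 1/2) {-1..0}"
    by (rule has_integral_eq[rotated, where f="\<lambda>x. 1 + x"]) (auto simp: tent_def)
  have "((\<lambda>x::real. 1 - x) has_integral ((\<lambda>x::real. x - x\<^sup>2/2) 1 - (\<lambda>x. x - x\<^sup>2/2) 0)) {0..1}"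
    by (rule fundamental_theorem_of_calculus)
       (auto simp: has_real_derivative_iff_has_vector_derivative[symmetric] intro!: derivative_eq_intros)
  then have "((\<lambda>x::real. 1 - x) has_integral 1/2) {0..1}"
    by simp
  then have right: "(tent has_integral 1/2) {0..1}"
    by (rule has_integral_eq[rotated, where f="\<lambda>x. 1 - x"]) (auto simp: tent_def)
  have "(tent has_integral 1) {-1..1}"
    using has_integral_combine[OF _ _ left right] by simp
  then show ?thesis
    by (rule has_integral_on_superset) (auto simp: tent_def)
qed

lemma integrable_tent: "integrable lborel tent"
  using nn_integral_has_integral_lborel[OF borel_measurable_tent tent_nonneg tent_has_integral]
  by (intro integrableI_nonneg) (auto simp: tent_nonneg)

definition tent_distr :: "real measure" where
  "tent_distr = density lborel tent"

lemma emeasure_tent_distr: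
  "A \<in> sets borel \<Longrightarrow> emeasure tent_distr A = (\<integral>\<^sup>+x. ennreal (tent x) * indicator A x \<partial>lborel)"
  unfolding tent_distr_def by (subst emeasure_density) auto

lemma real_distribution_tent_distr: "real_distribution tent_distr"
proof -
  have "emeasure tent_distr UNIV = 1"
    using nn_integral_has_integral_lborel[OF borel_measurable_tent tent_nonneg tent_has_integral]
    by (simp add: emeasure_tent_distr)
  then show ?thesis
    unfolding real_distribution_def real_distribution_axioms_def
    by (auto intro!: prob_spaceI simp: tent_distr_def)
qed

lemma measure_tent_distr_singleton: "measure tent_distr {a} = 0"
proof -
  have "emeasure tent_distr {a} \<le> (\<integral>\<^sup>+x. indicator {a} x \<partial>lborel)"
    using tent_le_1 by (simp add: emeasure_tent_distr nn_integral_mono indicator_def)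
  then show ?thesis
    by (simp add: measure_def)
qed

lemma measure_tent_distr_outside:
  assumes "1 \<le> a \<or> b \<le> -1"
  shows "measure tent_distr {a<..b} = 0"
proof -
  have "tent x = 0" if "x \<in> {a<..b}" for x
    using assms that by (intro tent_eq_0) auto
  then have "(\<lambda>x. ennreal (tent x) * indicator {a<..b} x) = (\<lambda>x. 0)"
    by (auto simp: fun_eq_iff indicator_def)
  then show ?thesis
    by (simp add: emeasure_tent_distr measure_def)
qed

lemma has_integral_linear_times_iexp:
  fixes t a b s :: real
  assumes t: "t \<noteq> 0" and ab: "a \<le> b"
  defines "G \<equiv> (\<lambda>w::complex. exp (\<i> * of_real t * w) * ((of_real s + w) / (\<i> * of_real t) + 1 / (of_real t)\<^sup>2))"
  shows "((\<lambda>x. of_real (s + x) * iexp (t * x)) has_integral (G (of_real b) - G (of_real a))) {a..b}"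
proof -
  have "(G has_field_derivative
          \<i> * of_real t * exp (\<i> * of_real t * w) * ((of_real s + w) / (\<i> * of_real t) + 1 / (of_real t)\<^sup>2)
          + exp (\<i> * of_real t * w) * (1 / (\<i> * of_real t))) (at w)" for w
    unfolding G_def using t by (auto intro!: derivative_eq_intros)
  moreover have "\<i> * of_real t * exp (\<i> * of_real t * w) * ((of_real s + w) / (\<i> * of_real t) + 1 / (of_real t)\<^sup>2)
          + exp (\<i> * of_real t * w) * (1 / (\<i> * of_real t)) = (of_real s + w) * exp (\<i> * of_real t * w)" for w
    using t by (auto simp: field_simps power2_eq_square)
  ultimately have "((\<lambda>x. G (of_real x)) has_vector_derivative
      (of_real s + of_real x) * exp (\<i> * of_real t * of_real x)) (at x within {a..b})" for x
    by (intro has_vector_derivative_real_field) simp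
  then have "((\<lambda>x. (of_real s + of_real x) * exp (\<i> * of_real t * of_real x)) has_integral
      (G (of_real b) - G (of_real a))) {a..b}"
    by (intro fundamental_theorem_of_calculus[OF ab]) auto
  then show ?thesis
    by (simp add: mult.assoc)
qed

lemma tent_iexp_has_integral:
  assumes t: "t \<noteq> 0"
  shows "((\<lambda>x. tent x *\<^sub>R iexp (t * x)) has_integral fejer (of_real t)) UNIV"
proof -
  define G where "G s w = exp (\<i> * of_real t * w) * ((of_real s + w) / (\<i> * of_real t) + 1 / (of_real t)\<^sup>2)"
    for s :: real and w :: complex
  have "((\<lambda>x. of_real (1 + x) * iexp (t * x)) has_integral (G 1 0 - G 1 (-1))) {-1..0}"
    using has_integral_linear_times_iexp[OF t, of "-1" 0 1] by (simp add: G_def)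
  then have left: "((\<lambda>x. tent x *\<^sub>R iexp (t * x)) has_integral (G 1 0 - G 1 (-1))) {-1..0}"
    by (rule has_integral_eq[rotated]) (auto simp: tent_def scaleR_conv_of_real)
  have "((\<lambda>x. of_real (-1 + x) * iexp (t * x)) has_integral (G (-1) 1 - G (-1) 0)) {0..1}"
    using has_integral_linear_times_iexp[OF t, of 0 1 "-1"] by (simp add: G_def)
  from has_integral_neg[OF this]
  have right: "((\<lambda>x. tent x *\<^sub>R iexp (t * x)) has_integral - (G (-1) 1 - G (-1) 0)) {0..1}"
    by (rule has_integral_eq[rotated]) (auto simp: tent_def scaleR_conv_of_real algebra_simps)
  have "(G 1 0 - G 1 (-1)) + - (G (-1) 1 - G (-1) 0)
      = (2 - (exp (\<i> * of_real t) + exp (-(\<i> * of_real t)))) / (of_real t)\<^sup>2"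
    unfolding G_def using t by (simp add: field_simps power2_eq_square)
  also have "exp (\<i> * of_real t) + exp (-(\<i> * of_real t)) = 2 * cos (of_real t :: complex)"
    by (simp add: cos_exp_eq)
  also have "(2 - 2 * cos (of_real t)) / (of_real t)\<^sup>2 = fejer (of_real t)"
    using t by (simp add: fejer_of_real cos_of_real)
  finally have "((\<lambda>x. tent x *\<^sub>R iexp (t * x)) has_integral fejer (of_real t)) {-1..1}"
    using has_integral_combine[OF _ _ left right] by simp
  then show ?thesis
    by (rule has_integral_on_superset) (auto simp: tent_def)
qed

lemma char_tent_distr: "char tent_distr t = fejer (of_real t)"
proof (cases "t = 0")
  case True
  then show ?thesis
    using real_distribution.char_zero[OF real_distribution_tent_distr] by simp
next
  case False
  have int: "integrable lborel (\<lambda>x. tent x *\<^sub>R iexp (t * x))"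
    by (rule Bochner_Integration.integrable_bound[OF integrable_tent])
       (auto simp: norm_mult tent_nonneg)
  have "char tent_distr t = (\<integral>x. tent x *\<^sub>R iexp (t * x) \<partial>lborel)"
    unfolding char_def tent_distr_def by (subst integral_density) (auto simp: tent_nonneg)
  also have "\<dots> = fejer (of_real t)"
    using integral_lborel[OF int] integral_unique[OF tent_iexp_has_integral[OF False]] by simp
  finally show ?thesis .
qed

lemma continuous_on_fejer_of_real: "continuous_on UNIV (\<lambda>t. fejer (of_real t))"
  using holomorphic_on_imp_continuous_on[OF holomorphic_fejer]
  by (rule continuous_on_compose2) (auto intro!: continuous_intros)

lemma norm_fejer_of_real_le: "norm (fejer (of_real t)) \<le> 8 / (1 + t\<^sup>2)"
proof (cases "t = 0")
  case False
  then have t2: "0 < t\<^sup>2" by simp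
  have "cos t = 1 - 2 * sin (t/2) ^ 2"
    using cos_double_sin[of "t/2"] by simp
  moreover have "sin (t/2) ^ 2 \<le> (t/2)\<^sup>2"
    using abs_sin_x_le_abs_x[of "t/2"] by (metis abs_ge_zero power2_abs power_mono)
  ultimately have "2 * (1 - cos t) / t\<^sup>2 \<le> 1"
    using t2 by (simp add: field_simps power_divide)
  moreover have "2 * (1 - cos t) / t\<^sup>2 \<le> 4 / t\<^sup>2"
    by (intro divide_right_mono) (use cos_ge_minus_one[of t] in argo, simp)
  moreover have "min 1 (4 / s) \<le> 8 / (1 + s)" if "0 < s" for s :: real
    using that by (cases "s \<le> 1") (auto simp: field_simps min_def)
  note this[OF t2]
  ultimately have "2 * (1 - cos t) / t\<^sup>2 \<le> 8 / (1 + t\<^sup>2)"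
    by linarith
  moreover have "0 \<le> 2 * (1 - cos t) / t\<^sup>2"
    using cos_le_one[of t] by simp
  ultimately have "norm (of_real (2 * (1 - cos t) / t\<^sup>2) :: complex) \<le> 8 / (1 + t\<^sup>2)"
    by (simp only: norm_of_real abs_of_nonneg)
  then show ?thesis
    by (simp only: fejer_of_real[OF False])
qed simp

lemma integrable_fejer_of_real: "integrable lborel (\<lambda>t. fejer (of_real t))"
proof (rule Bochner_Integration.integrable_bound)
  show "integrable lborel (\<lambda>t::real. 8 * inverse (1 + t\<^sup>2))"
    using integrable_inverse_1_plus_square unfolding set_integrable_def einterval_eq_UNIV by simp
  show "(\<lambda>t. fejer (of_real t)) \<in> borel_measurable lborel"
    using continuous_on_fejer_of_real borel_measurable_continuous_onI by simp
qed (use norm_fejer_of_real_le in \<open>simp add: divide_inverse\<close>)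

section \<open>Fourier transforms of integrable characteristic functions\<close>

lemma integrable_iexp_mult:
  fixes f :: "real \<Rightarrow> complex"
  assumes f: "integrable lborel f"
  shows "integrable lborel (\<lambda>t. iexp (-(t * v)) * f t)"
proof (rule Bochner_Integration.integrable_bound[OF f])
  have "(\<lambda>t. iexp (-(t * v))) \<in> borel_measurable borel"
    by (intro borel_measurable_continuous_onI continuous_intros)
  then show "(\<lambda>t. iexp (-(t * v)) * f t) \<in> borel_measurable lborel"
    using f by (intro borel_measurable_times) auto
qed (simp add: norm_mult norm_exp_i_times)

lemma symmetric_interval_integral_tendsto:
  fixes f :: "real \<Rightarrow> complex"
  assumes f: "integrable lborel f"
  shows "(\<lambda>T::nat. CLBINT t=ereal (real_of_int (- int T))..ereal (real T). f t) \<longlonglongrightarrow> (\<integral>t. f t \<partial>lborel)"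
proof -
  have "(CLBINT t=ereal (real_of_int (- int T))..ereal (real T). f t)
      = (\<integral>t. indicator {- real T..real T} t *\<^sub>R f t \<partial>lborel)" for T :: nat
    by (subst interval_integral_Icc) (auto simp: set_lebesgue_integral_def)
  moreover have "(\<lambda>T::nat. \<integral>t. indicator {- real T..real T} t *\<^sub>R f t \<partial>lborel) \<longlonglongrightarrow> (\<integral>t. f t \<partial>lborel)"
  proof (rule integral_dominated_convergence[where w="\<lambda>t. norm (f t)"])
    show "AE x in lborel. (\<lambda>T. indicator {- real T..real T} x *\<^sub>R f x) \<longlonglongrightarrow> f x"
    proof (rule AE_I2, rule tendsto_eventually)
      fix x :: real
      show "\<forall>\<^sub>F T in sequentially. indicator {- real T..real T} x *\<^sub>R f x = f x"
        unfolding eventually_sequentially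
        by (rule exI[of _ "nat \<lceil>\<bar>x\<bar>\<rceil>"]) (auto simp: indicator_def)
    qed
  qed (use f in \<open>auto simp: indicator_def\<close>)
  ultimately show ?thesis
    by simp
qed

definition levy_kernel :: "real \<Rightarrow> real \<Rightarrow> real \<Rightarrow> complex" where
  "levy_kernel a b t = (iexp (-(t * a)) - iexp (-(t * b))) / (\<i> * of_real t)"

lemma borel_measurable_levy_kernel [measurable]: "levy_kernel a b \<in> borel_measurable borel"
  unfolding levy_kernel_def
  by (intro borel_measurable_divide borel_measurable_continuous_onI continuous_intros)

lemma norm_levy_kernel_le:
  assumes "a \<le> b"
  shows "norm (levy_kernel a b t) \<le> b - a"
proof (cases "t = 0")
  case False
  have "levy_kernel a b t = (- (iexp ((-t) * b) - iexp ((-t) * a))) / (- (\<i> * of_real (-t)))"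
    unfolding levy_kernel_def by simp
  also have "\<dots> = (iexp ((-t) * b) - iexp ((-t) * a)) / (\<i> * of_real (-t))"
    by (rule minus_divide_divide)
  finally show ?thesis
    using Levy_Inversion_aux2[OF assms, of "-t"] False by simp
qed (use assms in \<open>simp add: levy_kernel_def\<close>)

lemma norm_iexp_sub_linear_le: "norm (iexp u - 1 - \<i> * of_real u) \<le> u\<^sup>2 / 2"
  using iexp_approx1[of u 1] by (simp add: eval_nat_numeral algebra_simps)

lemma norm_levy_kernel_sub_iexp_le:
  assumes t: "t \<noteq> 0" and d: "0 < d"
  shows "norm (levy_kernel v (v + d) t / of_real d - iexp (-(t * v))) \<le> \<bar>t\<bar> * d / 2"
proof -
  define E where "E = iexp (-(t * v))"
  define F where "F = iexp (-(t * d))"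
  have "iexp (-(t * (v + d))) = E * F"
    unfolding E_def F_def by (simp add: exp_add[symmetric] algebra_simps)
  then have "levy_kernel v (v + d) t / of_real d - E
      = - E * (F - 1 - \<i> * of_real (-(t * d))) / (\<i> * of_real t * of_real d)"
    unfolding levy_kernel_def E_def[symmetric] using t d
    by (simp add: divide_simps) (simp add: algebra_simps)
  then have "norm (levy_kernel v (v + d) t / of_real d - E) = norm (F - 1 - \<i> * of_real (-(t * d))) / (\<bar>t\<bar> * d)"
    using d by (simp add: norm_mult norm_divide E_def)
  also have "\<dots> \<le> ((-(t * d))\<^sup>2 / 2) / (\<bar>t\<bar> * d)"
    unfolding F_def using t d by (intro divide_right_mono norm_iexp_sub_linear_le) auto
  also have "\<dots> = \<bar>t\<bar> * d / 2"
    using t d by (simp add: power2_eq_square abs_mult_self_eq divide_simps)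
  finally show ?thesis
    unfolding E_def .
qed

lemma tendsto_integral_levy_kernel_quotient:
  fixes \<phi> :: "real \<Rightarrow> complex" and d :: "nat \<Rightarrow> real"
  assumes int: "integrable lborel \<phi>" and d: "\<And>n. 0 < d n" and d0: "d \<longlonglongrightarrow> 0"
  shows "(\<lambda>n. \<integral>t. levy_kernel v (v + d n) t / of_real (d n) * \<phi> t \<partial>lborel)
    \<longlonglongrightarrow> (\<integral>t. iexp (-(t * v)) * \<phi> t \<partial>lborel)"
proof (rule integral_dominated_convergence[where w="\<lambda>t. norm (\<phi> t)"])
  have [measurable]: "\<phi> \<in> borel_measurable borel"
    using borel_measurable_integrable[OF int] by simp
  show "(\<lambda>t. levy_kernel v (v + d n) t / of_real (d n) * \<phi> t) \<in> borel_measurable lborel" for n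
    by measurable
  show "(\<lambda>t. iexp (-(t * v)) * \<phi> t) \<in> borel_measurable lborel"
    using integrable_iexp_mult[OF int] by (rule borel_measurable_integrable)
  show "AE t in lborel. (\<lambda>n. levy_kernel v (v + d n) t / of_real (d n) * \<phi> t)
      \<longlonglongrightarrow> iexp (-(t * v)) * \<phi> t"
    using AE_lborel_singleton[of 0]
  proof eventually_elim
    case (elim t)
    have "(\<lambda>n. \<bar>t\<bar> * d n / 2) \<longlonglongrightarrow> \<bar>t\<bar> * 0 / 2"
      by (intro tendsto_divide tendsto_mult tendsto_const d0) simp
    then have lim: "(\<lambda>n. \<bar>t\<bar> * d n / 2) \<longlonglongrightarrow> 0"
      by simp
    have bound: "\<forall>n. norm (levy_kernel v (v + d n) t / of_real (d n) - iexp (-(t * v))) \<le> \<bar>t\<bar> * d n / 2"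
      using norm_levy_kernel_sub_iexp_le[OF elim d] by blast
    from Lim_null_comparison[OF always_eventually[OF bound] lim]
    show ?case
      by (intro tendsto_mult tendsto_const) (rule LIM_zero_cancel)
  qed
  show "AE t in lborel. norm (levy_kernel v (v + d n) t / of_real (d n) * \<phi> t) \<le> norm (\<phi> t)" for n
  proof (rule AE_I2)
    fix t
    have "norm (levy_kernel v (v + d n) t / of_real (d n) * \<phi> t)
        = norm (levy_kernel v (v + d n) t) * norm (\<phi> t) / d n"
      using d[of n] by (simp add: norm_mult norm_divide)
    also have "\<dots> \<le> d n * norm (\<phi> t) / d n"
      using norm_levy_kernel_le[of v "v + d n" t] d[of n]
      by (intro divide_right_mono mult_right_mono) auto
    finally show "norm (levy_kernel v (v + d n) t / of_real (d n) * \<phi> t) \<le> norm (\<phi> t)"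
      using d[of n] by simp
  qed
qed (use int in simp)

context real_distribution
begin

lemma integral_levy_kernel_char_eq_0:
  assumes ab: "a \<le> b" and int: "integrable lborel (char M)"
    and atoms: "measure M {a} = 0" "measure M {b} = 0" and gap: "measure M {a<..b} = 0"
  shows "(\<integral>t. levy_kernel a b t * char M t \<partial>lborel) = 0"
proof -
  have "integrable lborel (\<lambda>t. levy_kernel a b t * char M t)"
    by (rule Bochner_Integration.integrable_bound[where f="\<lambda>t. (b - a) * norm (char M t)"])
       (use int ab in \<open>auto intro!: mult_mono norm_levy_kernel_le simp: norm_mult\<close>)
  then have "(\<lambda>T. complex_of_real (1 / (2 * pi)) *
        (CLBINT t=ereal (real_of_int (- int T))..ereal (real T). levy_kernel a b t * char M t))
      \<longlonglongrightarrow> complex_of_real (1 / (2 * pi)) * (\<integral>t. levy_kernel a b t * char M t \<partial>lborel)"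
    by (intro tendsto_mult tendsto_const symmetric_interval_integral_tendsto)
  moreover have "(\<lambda>T. complex_of_real (1 / (2 * pi)) *
        (CLBINT t=ereal (real_of_int (- int T))..ereal (real T). levy_kernel a b t * char M t))
      \<longlonglongrightarrow> 0"
    using Levy_Inversion[OF ab atoms] gap unfolding levy_kernel_def by simp
  ultimately show ?thesis
    using LIMSEQ_unique by fastforce
qed

lemma integral_iexp_char_eq_0:
  assumes int: "integrable lborel (char M)" and atoms: "\<And>x. measure M {x} = 0"
    and d: "0 < d" and gap: "measure M {v<..v + d} = 0"
  shows "(\<integral>t. iexp (-(t * v)) * char M t \<partial>lborel) = 0"
proof -
  define d' where "d' n = d / real (Suc n)" for n
  have d': "0 < d' n" "d' n \<le> d" for n
    using d by (auto simp: d'_def field_simps)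
  have "measure M {v<..v + d' n} \<le> measure M {v<..v + d}" for n
    using d'(2)[of n] by (intro finite_measure_mono) auto
  then have "measure M {v<..v + d' n} = 0" for n
    using gap measure_nonneg[of M] by (metis antisym)
  then have "(\<integral>t. levy_kernel v (v + d' n) t * char M t \<partial>lborel) = 0" for n
    using d' by (intro integral_levy_kernel_char_eq_0 int atoms) (auto simp: less_imp_le)
  then have quotient_0: "(\<lambda>n. \<integral>t. levy_kernel v (v + d' n) t / of_real (d' n) * char M t \<partial>lborel) = (\<lambda>n. 0)"
    by simp
  have "d' \<longlonglongrightarrow> 0"
    unfolding d'_def by (rule LIMSEQ_Suc[OF lim_const_over_n])
  from tendsto_integral_levy_kernel_quotient[OF int d'(1) this, of v]
  have "(\<lambda>n. 0) \<longlonglongrightarrow> (\<integral>t. iexp (-(t * v)) * char M t \<partial>lborel)"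
    unfolding quotient_0 .
  then show ?thesis
    using LIMSEQ_unique[OF tendsto_const] by metis
qed

end

section \<open>Fourier transform of the wave packet\<close>

lemma fourier_fejer_eq_0:
  assumes "1 < \<bar>v\<bar>"
  shows "(\<integral>t. iexp (-(t * v)) * fejer (of_real t) \<partial>lborel) = 0"
proof -
  interpret real_distribution tent_distr
    by (rule real_distribution_tent_distr)
  have char: "char tent_distr = (\<lambda>t. fejer (of_real t))"
    by (simp add: fun_eq_iff char_tent_distr)
  have "measure tent_distr {v<..v + (\<bar>v\<bar> - 1)} = 0"
    using assms by (intro measure_tent_distr_outside) auto
  then show ?thesis
    using integral_iexp_char_eq_0[of "\<bar>v\<bar> - 1" v] assms
    by (simp add: char integrable_fejer_of_real measure_tent_distr_singleton)
qed

lemma packet_of_real: "packet R k (of_real t) = iexp (R * t) * (iexp t - 1) ^ Suc k * fejer (of_real t)"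
  unfolding packet_def by (simp add: mult.assoc)

lemma integrable_packet_of_real: "integrable lborel (\<lambda>t. packet R k (of_real t))"
proof (rule Bochner_Integration.integrable_bound[where f="\<lambda>t. 2 ^ Suc k * norm (fejer (of_real t))"])
  show "integrable lborel (\<lambda>t. 2 ^ Suc k * norm (fejer (of_real t)))"
    using integrable_fejer_of_real by auto
  have "continuous_on UNIV (\<lambda>t. packet R k (of_real t))"
    using holomorphic_on_imp_continuous_on[OF holomorphic_packet]
    by (rule continuous_on_compose2) (auto intro!: continuous_intros)
  then show "(\<lambda>t. packet R k (of_real t)) \<in> borel_measurable lborel"
    using borel_measurable_continuous_onI by simp
  have "norm (iexp t - 1) \<le> 2" for t
    using norm_triangle_ineq4[of "iexp t" 1] by (simp add: norm_exp_i_times)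
  then have "norm ((iexp t - 1) ^ Suc k) \<le> 2 ^ Suc k" for t
    unfolding norm_power by (intro power_mono) auto
  then show "AE t in lborel. norm (packet R k (of_real t)) \<le> norm (2 ^ Suc k * norm (fejer (of_real t)))"
    unfolding packet_of_real norm_mult norm_exp_i_times by (auto intro!: mult_right_mono)
qed

lemma iexp_mult_packet_of_real:
  "iexp (-(t * w)) * packet R k (of_real t) =
    (\<Sum>m\<le>Suc k. of_nat (Suc k choose m) * (-1) ^ (Suc k - m) * (iexp (-(t * (w - R - real m))) * fejer (of_real t)))"
proof -
  have binomial: "(iexp t - 1) ^ Suc k = (\<Sum>m\<le>Suc k. of_nat (Suc k choose m) * iexp t ^ m * (-1) ^ (Suc k - m))"
    using binomial_ring[of "iexp t" "-1" "Suc k"] by simp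
  have shift: "iexp (-(t * w)) * iexp (R * t) * iexp t ^ m = iexp (-(t * (w - R - real m)))" for m
  proof -
    have "iexp (-(t * w)) * iexp (R * t) * iexp t ^ m
        = exp (\<i> * of_real (-(t * w)) + \<i> * of_real (R * t) + of_nat m * (\<i> * of_real t))"
      by (simp only: exp_add exp_of_nat_mult)
    also have "\<i> * of_real (-(t * w)) + \<i> * of_real (R * t) + of_nat m * (\<i> * of_real t)
        = \<i> * of_real (-(t * (w - R - real m)))"
      by (simp add: algebra_simps)
    finally show ?thesis .
  qed
  have "iexp (-(t * w)) * packet R k (of_real t) = (\<Sum>m\<le>Suc k.
      iexp (-(t * w)) * iexp (R * t) * (of_nat (Suc k choose m) * iexp t ^ m * (-1) ^ (Suc k - m)) * fejer (of_real t))"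
    unfolding packet_of_real binomial by (simp only: sum_distrib_left sum_distrib_right mult.assoc)
  also have "\<dots> = (\<Sum>m\<le>Suc k. of_nat (Suc k choose m) * (-1) ^ (Suc k - m) *
      ((iexp (-(t * w)) * iexp (R * t) * iexp t ^ m) * fejer (of_real t)))"
    by (rule sum.cong) (simp_all add: ac_simps)
  finally show ?thesis
    by (simp only: shift)
qed

lemma fourier_packet_eq_0:
  assumes "w < R - 1 \<or> R + real k + 2 < w"
  shows "(\<integral>t. iexp (-(t * w)) * packet R k (of_real t) \<partial>lborel) = 0"
proof -
  have "1 < \<bar>w - R - real m\<bar>" if "m \<le> Suc k" for m
    using assms that by auto
  then have "(\<integral>t. iexp (-(t * (w - R - real m))) * fejer (of_real t) \<partial>lborel) = 0" if "m \<le> Suc k" for m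
    using that by (intro fourier_fejer_eq_0) auto
  moreover have "integrable lborel (\<lambda>t. c * (iexp (-(t * (w - R - real m))) * fejer (of_real t)))" for c m
    by (intro integrable_mult_right integrable_iexp_mult integrable_fejer_of_real)
  ultimately show ?thesis
    unfolding iexp_mult_packet_of_real by (simp only: Bochner_Integration.integral_sum) simp
qed

section \<open>Products of functions of one coordinate\<close>

lemma
  fixes G :: "'a::euclidean_space \<Rightarrow> real \<Rightarrow> complex"
  assumes int: "\<And>b. b \<in> Basis \<Longrightarrow> integrable lborel (G b)"
  shows integrable_prod_Basis: "integrable lborel (\<lambda>x. \<Prod>b\<in>Basis. G b (x \<bullet> b))"
    and integral_prod_Basis: "(\<integral>x. (\<Prod>b\<in>Basis. G b (x \<bullet> b)) \<partial>lborel) = (\<Prod>b\<in>Basis. \<integral>t. G b t \<partial>lborel)"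
proof -
  interpret product_sigma_finite "\<lambda>_. lborel"
    by standard
  have T: "(\<lambda>f. \<Sum>b\<in>Basis. f b *\<^sub>R b) \<in> (\<Pi>\<^sub>M b\<in>Basis. (lborel::real measure)) \<rightarrow>\<^sub>M (borel :: 'a measure)"
    by measurable
  have meas: "(\<lambda>x. \<Prod>b\<in>Basis. G b (x \<bullet> b)) \<in> borel_measurable borel"
  proof (rule borel_measurable_prod)
    fix b :: 'a assume "b \<in> Basis"
    then have "G b \<in> borel_measurable borel"
      using int by auto
    then show "(\<lambda>x. G b (x \<bullet> b)) \<in> borel_measurable borel"
      by (rule measurable_compose[rotated]) (auto intro!: borel_measurable_continuous_onI continuous_intros)
  qed
  have coord: "(\<lambda>f. \<Prod>b\<in>Basis. G b ((\<Sum>c\<in>Basis. f c *\<^sub>R c) \<bullet> b)) = (\<lambda>f. \<Prod>b\<in>Basis. G b (f b))"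
    by (intro ext prod.cong refl) (simp add: inner_sum_left inner_Basis if_distrib cong: if_cong)
  show "integrable lborel (\<lambda>x. \<Prod>b\<in>Basis. G b (x \<bullet> b))"
    unfolding lborel_eq[where 'a='a]
    by (subst integrable_distr_eq[OF T meas]) (simp add: coord product_integrable_prod int)
  show "(\<integral>x. (\<Prod>b\<in>Basis. G b (x \<bullet> b)) \<partial>lborel) = (\<Prod>b\<in>Basis. \<integral>t. G b t \<partial>lborel)"
    unfolding lborel_eq[where 'a='a]
    by (subst integral_distr[OF T meas]) (simp add: coord product_integral_prod int)
qed

lemma
  fixes F :: "'n::finite \<Rightarrow> real \<Rightarrow> complex"
  assumes int: "\<And>i. integrable lborel (F i)"
  shows integrable_prod_coordinates: "integrable lborel (\<lambda>z::real^'n. \<Prod>i\<in>UNIV. F i (z $ i))"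
    and integral_prod_coordinates:
      "(\<integral>z. (\<Prod>i\<in>UNIV. F i (z $ i)) \<partial>(lborel :: (real^'n) measure)) = (\<Prod>i\<in>UNIV. \<integral>t. F i t \<partial>lborel)"
proof -
  define G where "G b = F (axis_index b)" for b :: "real^'n"
  have Basis: "(Basis :: (real^'n) set) = range (\<lambda>i. axis i 1)" and inj: "inj (\<lambda>i::'n. axis i (1::real))"
    by (auto simp: Basis_vec_def inj_def axis_eq_axis)
  have eq: "(\<Prod>b\<in>Basis. G b (z \<bullet> b)) = (\<Prod>i\<in>UNIV. F i (z $ i))" for z :: "real^'n"
    unfolding Basis by (subst prod.reindex[OF inj]) (simp add: G_def inner_axis)
  have eq_integral: "(\<Prod>b\<in>Basis. \<integral>t. G b t \<partial>lborel) = (\<Prod>i\<in>UNIV. \<integral>t. F i t \<partial>lborel)"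
    unfolding Basis by (subst prod.reindex[OF inj]) (simp add: G_def)
  have intG: "integrable lborel (G b)" if "b \<in> Basis" for b
    unfolding G_def by (rule int)
  show "integrable lborel (\<lambda>z::real^'n. \<Prod>i\<in>UNIV. F i (z $ i))"
    using integrable_prod_Basis[of G, OF intG] unfolding eq .
  show "(\<integral>z. (\<Prod>i\<in>UNIV. F i (z $ i)) \<partial>(lborel :: (real^'n) measure)) = (\<Prod>i\<in>UNIV. \<integral>t. F i t \<partial>lborel)"
    using integral_prod_Basis[of G, OF intG] unfolding eq eq_integral .
qed

lemma fourier_prod_coordinates:
  fixes F :: "'n::finite \<Rightarrow> real \<Rightarrow> complex"
  assumes "\<And>i. integrable lborel (F i)"
  shows "fourier (\<lambda>z. \<Prod>i\<in>UNIV. F i (z $ i)) \<xi> = (\<Prod>i\<in>UNIV. \<integral>t. iexp (-(t * \<xi> $ i)) * F i t \<partial>lborel)"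
proof -
  have "exp (- \<i> * complex_of_real (\<xi> \<bullet> z)) = exp (\<Sum>i\<in>UNIV. \<i> * complex_of_real (-(z $ i * \<xi> $ i)))"
    for z :: "real^'n"
    by (simp add: inner_vec_def sum_distrib_left algebra_simps sum_negf[symmetric])
  then have factor: "exp (- \<i> * complex_of_real (\<xi> \<bullet> z)) * (\<Prod>i\<in>UNIV. F i (z $ i))
      = (\<Prod>i\<in>UNIV. iexp (-(z $ i * \<xi> $ i)) * F i (z $ i))" for z :: "real^'n"
    by (simp add: exp_sum prod.distrib)
  show ?thesis
    unfolding fourier_def factor by (intro integral_prod_coordinates integrable_iexp_mult assms)
qed

section \<open>The Cauchy data\<close>

lemma tensor_packet:
  "tensor (\<lambda>i. packet (R i) k) (\<lambda>_. 0) = (\<lambda>z. \<Prod>i\<in>UNIV. packet (R i) k (of_real (z $ i)))"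
  by (simp add: tensor_def fun_eq_iff)

lemma integrable_tensor_packet: "integrable lborel (tensor (\<lambda>i. packet (R i) k) (\<lambda>_. 0))"
  unfolding tensor_packet by (intro integrable_prod_coordinates integrable_packet_of_real)

lemma tensor_packet_neq_0: "tensor (\<lambda>i. packet (R i) k) (\<lambda>_. 0) \<noteq> (\<lambda>_. 0)"
proof
  assume "tensor (\<lambda>i. packet (R i) k) (\<lambda>_. 0) = (\<lambda>_. 0)"
  then have "(\<Prod>i\<in>UNIV. packet (R i) k (of_real ((\<chi> i. pi) $ i))) = 0"
    unfolding tensor_packet by (rule fun_cong)
  moreover have "packet r k (of_real pi) \<noteq> 0" for r
    using fejer_of_real[of pi] by (simp add: packet_of_real)
  ultimately show False
    by simp
qed

lemma fsupp_tensor_packet: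
  fixes R :: "'n::finite \<Rightarrow> real"
  shows "fsupp (tensor (\<lambda>i. packet (R i) k) (\<lambda>_. 0)) \<subseteq> {\<xi>. \<forall>i. R i - 1 \<le> \<xi> $ i \<and> \<xi> $ i \<le> R i + real k + 2}"
proof -
  have "fourier (tensor (\<lambda>i. packet (R i) k) (\<lambda>_. 0)) \<xi> = 0"
    if "\<not> (R i - 1 \<le> \<xi> $ i \<and> \<xi> $ i \<le> R i + real k + 2)" for \<xi> i
  proof -
    have "(\<integral>t. iexp (-(t * \<xi> $ i)) * packet (R i) k (of_real t) \<partial>lborel) = 0"
      using that by (intro fourier_packet_eq_0) auto
    then show ?thesis
      unfolding tensor_packet
      using fourier_prod_coordinates[of "\<lambda>i t. packet (R i) k (of_real t)" \<xi>] integrable_packet_of_real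
      by auto
  qed
  then have "{\<xi>. fourier (tensor (\<lambda>i. packet (R i) k) (\<lambda>_. 0)) \<xi> \<noteq> 0}
      \<subseteq> {\<xi>. \<forall>i. R i - 1 \<le> \<xi> $ i \<and> \<xi> $ i \<le> R i + real k + 2}"
    by blast
  moreover have "closed {\<xi>. \<forall>i. R i - 1 \<le> \<xi> $ i \<and> \<xi> $ i \<le> R i + real k + 2}"
    by (intro closed_Collect_all closed_Collect_conj closed_Collect_le) (auto intro!: continuous_intros)
  ultimately show ?thesis
    unfolding fsupp_def by (rule closure_minimal)
qed

lemma vanish_order_tensor_packet:
  fixes R :: "'n::finite \<Rightarrow> real"
  assumes "j \<in> J"
  shows "vanish_order k {z. \<forall>i\<in>J. z $ i = 0} (tensor (\<lambda>i. packet (R i) k) (\<lambda>_. 0))"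
  unfolding vanish_order_def
proof (intro allI impI)
  fix "is" :: "'n list" and z :: "real^'n"
  assume "length is \<le> k" and "z \<in> {z. \<forall>i\<in>J. z $ i = 0}"
  then have "count_list is j \<le> k" and "z $ j = 0"
    using count_le_length[of "is" j] assms by auto
  then have "(deriv ^^ count_list is j) (packet (R j) k) (of_real (z $ j)) = 0"
    by (simp add: higher_deriv_packet_0)
  then show "iter_pd is (tensor (\<lambda>i. packet (R i) k) (\<lambda>_. 0)) z = 0"
    by (auto simp: iter_pd_tensor holomorphic_packet tensor_def)
qed

lemma pnorm_less_pnorm:
  fixes \<xi> :: "real^'n::finite"
  assumes "a \<in> X" and bound: "\<And>i. i \<in> Y \<Longrightarrow> \<bar>\<xi> $ i\<bar> \<le> C"
    and large: "real CARD('n) * C\<^sup>2 < (\<xi> $ a)\<^sup>2"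
  shows "pnorm Y \<xi> < pnorm X \<xi>"
proof -
  have "(\<Sum>i\<in>Y. (\<xi> $ i)\<^sup>2) \<le> (\<Sum>i\<in>Y. C\<^sup>2)"
    using bound by (intro sum_mono) (metis abs_ge_zero power2_abs power_mono)
  also have "\<dots> \<le> real CARD('n) * C\<^sup>2"
    by (simp add: card_mono mult_right_mono)
  also have "\<dots> < (\<xi> $ a)\<^sup>2"
    by (rule large)
  also have "\<dots> \<le> (\<Sum>i\<in>X. (\<xi> $ i)\<^sup>2)"
    using assms(1) by (intro member_le_sum) auto
  finally show ?thesis
    unfolding pnorm_def by (simp add: real_sqrt_less_mono)
qed

lemma packet_box_subset_cone:
  fixes R :: "'n::finite \<Rightarrow> real"
  assumes "a \<in> X" "X \<inter> Y = {}"
    and R: "\<And>i. R i = (if i = a then 1 + (real CARD('n) + 1) * (real k + 2) else 0)"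
  shows "{\<xi>. \<forall>i. R i - 1 \<le> \<xi> $ i \<and> \<xi> $ i \<le> R i + real k + 2} \<subseteq> {\<xi>. pnorm Y \<xi> < pnorm X \<xi>}"
proof safe
  fix \<xi> :: "real^'n"
  assume box: "\<forall>i. R i - 1 \<le> \<xi> $ i \<and> \<xi> $ i \<le> R i + real k + 2"
  define n C where "n = real CARD('n)" and "C = real k + 2"
  have "\<bar>\<xi> $ i\<bar> \<le> C" if "i \<in> Y" for i
    using box[rule_format, of i] that assms R[of i] by (cases "i = a") (auto simp: C_def abs_le_iff)
  moreover have "n * C\<^sup>2 < (\<xi> $ a)\<^sup>2"
  proof -
    have "n < (n + 1)\<^sup>2"
      unfolding n_def by (simp add: power2_eq_square algebra_simps add_pos_nonneg)
    then have "n * C\<^sup>2 < (n + 1)\<^sup>2 * C\<^sup>2"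
      by (intro mult_strict_right_mono) (auto simp: C_def)
    also have "\<dots> \<le> (\<xi> $ a)\<^sup>2"
      using box[rule_format, of a] R[of a]
      by (simp add: n_def C_def power_mult_distrib[symmetric] power_mono)
    finally show ?thesis .
  qed
  ultimately show "pnorm Y \<xi> < pnorm X \<xi>"
    using pnorm_less_pnorm[OF assms(1)] unfolding n_def by blast
qed

theorem theorem10:
  fixes X Y P1 P2 :: "'n::finite set" and k :: nat
  assumes "X \<inter> Y = {}" and "X \<union> Y = UNIV" and "X \<noteq> {}"
    and "P1 \<subseteq> X" and "P2 \<subseteq> Y"
    and "(X - P1) \<union> (Y - P2) \<noteq> {}"
  shows "\<exists>u0 u1 :: real^'n \<Rightarrow> complex.
           smooth_fun u0 \<and> smooth_fun u1 \<and>
           integrable lborel u0 \<and> integrable lborel u1 \<and>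
           (u0 \<noteq> (\<lambda>_. 0) \<or> u1 \<noteq> (\<lambda>_. 0)) \<and>
           fsupp u0 \<union> fsupp u1 \<subseteq> {\<xi>. pnorm Y \<xi> < pnorm X \<xi>} \<and>
           vanish_order k {z. \<forall>i \<in> (X - P1) \<union> (Y - P2). z $ i = 0} u0 \<and>
           vanish_order k {z. \<forall>i \<in> (X - P1) \<union> (Y - P2). z $ i = 0} u1"
proof -
  obtain a where a: "a \<in> X"
    using assms(3) by blast
  obtain j where j: "j \<in> (X - P1) \<union> (Y - P2)"
    using assms(6) by blast
  define R where "R i = (if i = a then 1 + (real CARD('n) + 1) * (real k + 2) else 0)" for i
  define u0 where "u0 = tensor (\<lambda>i. packet (R i) k) (\<lambda>_. 0)"
  have "smooth_fun u0"
    unfolding u0_def by (intro smooth_fun_tensor holomorphic_packet)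
  moreover have "integrable lborel u0" and "u0 \<noteq> (\<lambda>_. 0)"
    unfolding u0_def by (rule integrable_tensor_packet tensor_packet_neq_0)+
  moreover have "fsupp u0 \<subseteq> {\<xi>. pnorm Y \<xi> < pnorm X \<xi>}"
    unfolding u0_def using fsupp_tensor_packet packet_box_subset_cone[OF a assms(1) R_def] by (rule order_trans)
  moreover have "vanish_order k {z. \<forall>i \<in> (X - P1) \<union> (Y - P2). z $ i = 0} u0"
    unfolding u0_def using j by (rule vanish_order_tensor_packet)
  moreover have "fsupp (\<lambda>_::real^'n. 0::complex) = {}"
    by (simp add: fsupp_def fourier_def)
  moreover have "vanish_order k M (\<lambda>_::real^'n. 0::complex)" for M
    by (simp add: vanish_order_def iter_pd_zero)
  ultimately show ?thesis
    using smooth_fun_zero by blast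
qed

end
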